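(* Let $Y_1,\dots,Y_{n_{obs}}$ ($n_{obs}\ge 2$) be i.i.d. $N(\mu,\sigma^2)$. Let $\bar Y_{obs}=\frac1{n_{obs}}\sum_i Y_i$ and $CSS=\sum_{i=1}^{n_{obs}}(Y_i-\bar Y_{obs})^2$. Fix a real number $\nu_{prior}$ and set $\nu_{PD}=\nu_{prior}+n_{obs}-1>0$. Let $U_{PD}\sim\chi^2_{\nu_{PD}}$ and $Z_{PD}\sim N(0,1/n_{obs})$ be independent of each other and of the data. Define the posterior-draw estimators $\hat\sigma^2_{obs,PD}=CSS/U_{PD}$, $\hat\sigma_{obs,PD}=\sqrt{\hat\sigma^2_{obs,PD}}$ and $\hat\mu_{obs,PD}=\bar Y_{obs}+\hat\sigma_{obs,PD}Z_{PD}$. Then: (i) if $n_{obs}+\nu_{prior}>3$, $E(\hat\mu_{obs,PD})=\mu$, $\operatorname{Var}(\hat\mu_{obs,PD})=\sigma^2\frac{2n_{obs}+\nu_{prior}-4}{n_{obs}(n_{obs}+\nu_{prior}-3)}$, and $E(\hat\sigma^2_{obs,PD})-\sigma^2=\sigma^2\frac{2-\nu_{prior}}{n_{obs}+\nu_{prior}-3}$; (ii) if $n_{obs}+\nu_{prior}>5$, $\operatorname{Var}(\hat\sigma^2_{obs,PD})=\sigma^4\frac{2(n_{obs}-1)(2n_{obs}+\nu_{prior}-4)}{(n_{obs}+\nu_{prior}-5)(n_{obs}+\nu_{prior}-3)^2}$.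
   Context: This posterior-draw construction corresponds to Bayesian posterior draws under a uniform prior on $\mu$ and the (possibly improper) prior $f(\sigma^2)\propto\sigma^{-\nu_{prior}-2}$. *)

theory Defs
  imports "HOL-Probability.Probability"
begin

definition chi_squared_density :: "real \<Rightarrow> real \<Rightarrow> real" where
  "chi_squared_density k x =
     (if 0 < x then x powr (k / 2 - 1) * exp (- x / 2) / (2 powr (k / 2) * Gamma (k / 2)) else 0)"

definition sample_mean :: "nat \<Rightarrow> (nat \<Rightarrow> 'a \<Rightarrow> real) \<Rightarrow> 'a \<Rightarrow> real" where
  "sample_mean n Y \<omega> = (\<Sum>i<n. Y i \<omega>) / real n"

definition CSS :: "nat \<Rightarrow> (nat \<Rightarrow> 'a \<Rightarrow> real) \<Rightarrow> 'a \<Rightarrow> real" where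
  "CSS n Y \<omega> = (\<Sum>i<n. (Y i \<omega> - sample_mean n Y \<omega>)\<^sup>2)"

definition sigma2_PD :: "nat \<Rightarrow> (nat \<Rightarrow> 'a \<Rightarrow> real) \<Rightarrow> ('a \<Rightarrow> real) \<Rightarrow> 'a \<Rightarrow> real" where
  "sigma2_PD n Y U \<omega> = CSS n Y \<omega> / U \<omega>"

definition mu_PD :: "nat \<Rightarrow> (nat \<Rightarrow> 'a \<Rightarrow> real) \<Rightarrow> ('a \<Rightarrow> real) \<Rightarrow> ('a \<Rightarrow> real) \<Rightarrow> 'a \<Rightarrow> real" where
  "mu_PD n Y U Z \<omega> = sample_mean n Y \<omega> + sqrt (sigma2_PD n Y U \<omega>) * Z \<omega>"

end

theory Submission
  imports Defs
begin

text \<open>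
  Write \<open>Y\<^sub>i = \<mu> + X\<^sub>i\<close>. The sample mean and \<open>CSS\<close> are polynomials of degree at most two in
  the independent centred normals \<open>X\<^sub>i\<close>, so Isserlis' formula
  \<open>E (X\<^sub>i X\<^sub>j X\<^sub>k X\<^sub>l) = \<sigma>\<^sup>4 (\<delta>\<^sub>i\<^sub>j \<delta>\<^sub>k\<^sub>l + \<delta>\<^sub>i\<^sub>k \<delta>\<^sub>j\<^sub>l + \<delta>\<^sub>i\<^sub>l \<delta>\<^sub>j\<^sub>k)\<close> gives
  \<open>E CSS = (n - 1) \<sigma>\<^sup>2\<close> and \<open>E CSS\<^sup>2 = (n\<^sup>2 - 1) \<sigma>\<^sup>4\<close> without any distributional fact about
  \<open>CSS\<close> (Cochran's theorem). As \<open>U\<close> and \<open>Z\<close> are independent of the sample and of each other,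
  every moment of \<open>CSS / U\<close> and of \<open>mean + sqrt (CSS / U) * Z\<close> factors into a sample moment,
  an inverse moment \<open>E U\<^sup>-\<^sup>1 = 1 / (k - 2)\<close> or \<open>E U\<^sup>-\<^sup>2 = 1 / ((k - 2) (k - 4))\<close> of the
  chi-squared variable with \<open>k = \<nu> + n - 1\<close> degrees of freedom, and a moment of \<open>Z\<close>; the cross
  term in the square of the mean estimator vanishes because \<open>E Z = 0\<close>.
\<close>

section \<open>Products of independent random variables\<close>

lemma prod_list_map_eq_prod_count:
  fixes f :: "'a \<Rightarrow> 'b :: comm_monoid_mult"
  shows "prod_list (map f xs) = (\<Prod>x\<in>set xs. f x ^ count_list xs x)"
proof (induction xs)
  case (Cons y xs)
  have "(\<Prod>x\<in>set (y # xs). f x ^ count_list (y # xs) x)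
      = f y ^ Suc (count_list xs y) * (\<Prod>x\<in>set xs - {y}. f x ^ count_list (y # xs) x)"
    by (simp add: prod.insert_remove)
  also have "(\<Prod>x\<in>set xs - {y}. f x ^ count_list (y # xs) x) = (\<Prod>x\<in>set xs - {y}. f x ^ count_list xs x)"
    by (intro prod.cong) auto
  also have "f y ^ Suc (count_list xs y) * \<dots> = f y * (\<Prod>x\<in>set xs. f x ^ count_list xs x)"
    by (cases "y \<in> set xs") (simp_all add: prod.remove count_list_0_iff mult.assoc)
  finally show ?case
    using Cons.IH by simp
qed simp

lemma (in prob_space) indep_sets_reindex:
  assumes "inj_on f I" "indep_sets F (f ` I)"
  shows "indep_sets (\<lambda>i. F (f i)) I"
proof (rule indep_setsI)
  show "F (f i) \<subseteq> events" if "i \<in> I" for i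
    using assms(2) that by (auto simp: indep_sets_def)
next
  fix A J assume J: "J \<noteq> {}" "J \<subseteq> I" "finite J" "\<forall>j\<in>J. A j \<in> F (f j)"
  define B where "B = (\<lambda>k. A (the_inv_into J f k))"
  have inj: "inj_on f J" using assms(1) J(2) by (rule inj_on_subset)
  have B: "B (f j) = A j" if "j \<in> J" for j
    using the_inv_into_f_f[OF inj that] by (simp add: B_def)
  have "prob (\<Inter>k\<in>f ` J. B k) = (\<Prod>k\<in>f ` J. prob (B k))"
    by (rule indep_setsD[OF assms(2)]) (use J B in auto)
  then show "prob (\<Inter>j\<in>J. A j) = (\<Prod>j\<in>J. prob (A j))"
    by (simp add: prod.reindex[OF inj] B)
qed

lemma (in prob_space) indep_vars_reindex:
  assumes "inj_on f I" "indep_vars M' X (f ` I)"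
  shows "indep_vars (\<lambda>i. M' (f i)) (\<lambda>i. X (f i)) I"
  using assms indep_sets_reindex[OF assms(1)] unfolding indep_vars_def by auto

lemma (in prob_space) has_bochner_integral_const: "has_bochner_integral M (\<lambda>_. c) (c :: real)"
  by (simp add: has_bochner_integral_iff prob_space)

lemma (in prob_space) has_bochner_integral_indep_prod_list:
  fixes X :: "'i \<Rightarrow> 'a \<Rightarrow> real"
  assumes indep: "indep_vars (\<lambda>_. borel) X I" and xs: "set xs \<subseteq> I"
    and moments: "\<And>i. i \<in> set xs \<Longrightarrow> has_bochner_integral M (\<lambda>\<omega>. X i \<omega> ^ count_list xs i) (m i)"
  shows "has_bochner_integral M (\<lambda>\<omega>. \<Prod>i\<leftarrow>xs. X i \<omega>) (\<Prod>i\<in>set xs. m i)"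
proof -
  have powers: "indep_vars (\<lambda>_. borel) (\<lambda>i \<omega>. X i \<omega> ^ count_list xs i) (set xs)"
    by (rule indep_vars_compose2[OF indep_vars_subset[OF indep xs]]) measurable
  have int: "integrable M (\<lambda>\<omega>. X i \<omega> ^ count_list xs i)" if "i \<in> set xs" for i
    using moments[OF that] by (simp add: has_bochner_integral_iff)
  show ?thesis
    unfolding prod_list_map_eq_prod_count
    using indep_vars_integrable[OF finite_set powers int] indep_vars_lebesgue_integral[OF finite_set powers int]
      moments
    by (simp add: has_bochner_integral_iff)
qed

lemma (in prob_space) has_bochner_integral_indep_block_mult:
  fixes X :: "'i \<Rightarrow> 'a \<Rightarrow> real" and F :: "('i \<Rightarrow> real) \<Rightarrow> real" and g h :: "real \<Rightarrow> real"
  assumes indep: "indep_vars (\<lambda>_. borel) X (insert a (insert b A))"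
    and ab: "a \<notin> A" "b \<notin> A" "a \<noteq> b"
    and meas: "F \<in> borel_measurable (PiM A (\<lambda>_. borel))"
      "g \<in> borel_measurable borel" "h \<in> borel_measurable borel"
    and F: "has_bochner_integral M (\<lambda>\<omega>. F (\<lambda>i\<in>A. X i \<omega>)) u"
    and g: "has_bochner_integral M (\<lambda>\<omega>. g (X a \<omega>)) v"
    and h: "has_bochner_integral M (\<lambda>\<omega>. h (X b \<omega>)) w"
  shows "has_bochner_integral M (\<lambda>\<omega>. F (\<lambda>i\<in>A. X i \<omega>) * (g (X a \<omega>) * h (X b \<omega>))) (u * (v * w))"
proof -
  have "indep_var borel ((\<lambda>f. g (f a)) \<circ> (\<lambda>\<omega>. \<lambda>i\<in>{a}. X i \<omega>)) borel ((\<lambda>f. h (f b)) \<circ> (\<lambda>\<omega>. \<lambda>i\<in>{b}. X i \<omega>))"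
    by (rule indep_var_compose[OF indep_var_restrict[OF indep]]) (use ab meas in auto)
  then have gh: "indep_var borel (\<lambda>\<omega>. g (X a \<omega>)) borel (\<lambda>\<omega>. h (X b \<omega>))"
    by (simp add: comp_def)
  have proj: "(\<lambda>f. f a) \<in> borel_measurable (PiM {a, b} (\<lambda>_. borel))"
    "(\<lambda>f. f b) \<in> borel_measurable (PiM {a, b} (\<lambda>_. borel))"
    by (auto intro: measurable_component_singleton)
  have "(\<lambda>f. g (f a) * h (f b)) \<in> borel_measurable (PiM {a, b} (\<lambda>_. borel))"
    using borel_measurable_times[OF measurable_compose[OF proj(1) meas(2)]
        measurable_compose[OF proj(2) meas(3)]] .
  then have "indep_var borel (F \<circ> (\<lambda>\<omega>. \<lambda>i\<in>A. X i \<omega>)) borel ((\<lambda>f. g (f a) * h (f b)) \<circ> (\<lambda>\<omega>. \<lambda>i\<in>{a, b}. X i \<omega>))"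
    by (intro indep_var_compose[OF indep_var_restrict[OF indep]]) (use ab meas in auto)
  then have Fgh: "indep_var borel (\<lambda>\<omega>. F (\<lambda>i\<in>A. X i \<omega>)) borel (\<lambda>\<omega>. g (X a \<omega>) * h (X b \<omega>))"
    by (simp add: comp_def)
  have int: "integrable M (\<lambda>\<omega>. F (\<lambda>i\<in>A. X i \<omega>))" "integrable M (\<lambda>\<omega>. g (X a \<omega>))" "integrable M (\<lambda>\<omega>. h (X b \<omega>))"
    using F g h by (auto simp: has_bochner_integral_iff)
  note gh_int = indep_var_integrable[OF gh int(2,3)]
  show ?thesis
    using F g h indep_var_integrable[OF Fgh int(1) gh_int]
      indep_var_lebesgue_integral[OF Fgh int(1) gh_int] indep_var_lebesgue_integral[OF gh int(2,3)]
    by (simp add: has_bochner_integral_iff)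
qed


section \<open>Moments of the chi-squared distribution\<close>

lemma distributed_has_bochner_integral:
  fixes g :: "'b \<Rightarrow> real"
  assumes "distributed M N X (\<lambda>x. ennreal (f x))" "\<And>x. x \<in> space N \<Longrightarrow> 0 \<le> f x"
    "g \<in> borel_measurable N" "has_bochner_integral N (\<lambda>x. f x * g x) v"
  shows "has_bochner_integral M (\<lambda>\<omega>. g (X \<omega>)) v"
  using assms distributed_integrable[OF assms(1,3)] distributed_integral[OF assms(1,3)]
  by (simp add: has_bochner_integral_iff)

lemma has_bochner_integral_powr_exp_half:
  fixes a :: real
  assumes "0 < a"
  shows "has_bochner_integral lborel (\<lambda>x. indicator {0<..} x * x powr (a - 1) * exp (- x / 2))
    (2 powr a * Gamma a)"
proof -
  let ?f = "\<lambda>t. indicator {0..} t * t powr (a - 1) / exp t"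
  have "has_bochner_integral lborel ?f (Gamma a)"
    by (rule has_bochner_integral_nn_integral)
       (use assms Gamma_conv_nn_integral_real[OF assms] in \<open>auto simp: less_imp_le\<close>)
  then have "has_bochner_integral lborel (\<lambda>x. ?f (x / 2)) (2 * Gamma a)"
    using lborel_has_bochner_integral_real_affine_iff[of "1/2" ?f "Gamma a" 0] by simp
  then have "has_bochner_integral lborel (\<lambda>x. 2 powr (a - 1) * ?f (x / 2)) (2 powr (a - 1) * (2 * Gamma a))"
    by (rule has_bochner_integral_mult_right)
  moreover have "2 powr (a - 1) * ?f (x / 2) = indicator {0<..} x * x powr (a - 1) * exp (- x / 2)" for x
    by (cases x "0 :: real" rule: linorder_cases)
       (auto simp: indicator_def powr_divide exp_minus field_simps)
  ultimately show ?thesis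
    by (simp add: powr_diff)
qed

lemma chi_squared_density_nonneg: "0 < k \<Longrightarrow> 0 \<le> chi_squared_density k x"
  by (simp add: chi_squared_density_def)

lemma has_bochner_integral_chi_squared_powr:
  assumes "0 < k" "0 < k / 2 + p"
  shows "has_bochner_integral lborel (\<lambda>x. chi_squared_density k x * x powr p)
    (2 powr p * Gamma (k / 2 + p) / Gamma (k / 2))"
proof -
  have "has_bochner_integral lborel
      (\<lambda>x. indicator {0<..} x * x powr (k / 2 + p - 1) * exp (- x / 2) / (2 powr (k / 2) * Gamma (k / 2)))
      (2 powr (k / 2 + p) * Gamma (k / 2 + p) / (2 powr (k / 2) * Gamma (k / 2)))"
    by (rule has_bochner_integral_divide_zero[OF has_bochner_integral_powr_exp_half[OF assms(2)]])
  moreover have "(\<lambda>x. indicator {0<..} x * x powr (k / 2 + p - 1) * exp (- x / 2)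
        / (2 powr (k / 2) * Gamma (k / 2)))
      = (\<lambda>x. chi_squared_density k x * x powr p)"
    by (auto simp: chi_squared_density_def fun_eq_iff indicator_def powr_add[symmetric] field_simps)
  ultimately show ?thesis
    by (simp add: powr_add)
qed

lemma (in prob_space) chi_squared_moment:
  assumes U: "distributed M lborel U (\<lambda>x. ennreal (chi_squared_density k x))"
    and k: "0 < k" "0 < k / 2 + p"
    and g: "g \<in> borel_measurable borel" "\<And>x. 0 < x \<Longrightarrow> g x = x powr p"
  shows "has_bochner_integral M (\<lambda>\<omega>. g (U \<omega>)) (2 powr p * Gamma (k / 2 + p) / Gamma (k / 2))"
proof (rule distributed_has_bochner_integral[OF U])
  have "(\<lambda>x. chi_squared_density k x * g x) = (\<lambda>x. chi_squared_density k x * x powr p)"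
    using g(2) by (auto simp: fun_eq_iff chi_squared_density_def)
  then show "has_bochner_integral lborel (\<lambda>x. chi_squared_density k x * g x)
      (2 powr p * Gamma (k / 2 + p) / Gamma (k / 2))"
    using has_bochner_integral_chi_squared_powr[OF k] by simp
qed (use k(1) g(1) chi_squared_density_nonneg in auto)

lemma Gamma_plus1_pos: "0 < x \<Longrightarrow> Gamma (x + 1) = x * Gamma (x :: real)"
  by (rule Gamma_plus1) auto

lemma Gamma_half_ratio_minus_one:
  fixes k :: real
  assumes "2 < k"
  shows "2 powr -1 * Gamma (k / 2 + -1) / Gamma (k / 2) = 1 / (k - 2)"
proof -
  define a where "a = k / 2 - 1"
  have a: "0 < a" and k: "k / 2 = a + 1" "k / 2 + -1 = a" "k - 2 = 2 * a"
    using assms by (simp_all add: a_def)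
  have "Gamma a \<noteq> 0"
    using Gamma_real_pos[OF a] by simp
  then show ?thesis
    using a by (simp add: k Gamma_plus1_pos powr_minus_divide)
qed

lemma Gamma_half_ratio_minus_two:
  fixes k :: real
  assumes "4 < k"
  shows "2 powr -2 * Gamma (k / 2 + -2) / Gamma (k / 2) = 1 / ((k - 2) * (k - 4))"
proof -
  define a where "a = k / 2 - 2"
  have a: "0 < a" and k: "k / 2 = (a + 1) + 1" "k / 2 + -2 = a" "k - 2 = 2 * (a + 1)" "k - 4 = 2 * a"
    using assms by (simp_all add: a_def)
  have "Gamma a \<noteq> 0"
    using Gamma_real_pos[OF a] by simp
  then show ?thesis
    using a by (simp only: k Gamma_plus1_pos) (simp add: Gamma_plus1_pos powr_minus_divide)
qed

lemma (in prob_space) chi_squared_inverse_moment: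
  assumes U: "distributed M lborel U (\<lambda>x. ennreal (chi_squared_density k x))" and k: "2 < k"
    and g: "g \<in> borel_measurable borel" "\<And>x. 0 < x \<Longrightarrow> g x = 1 / x"
  shows "has_bochner_integral M (\<lambda>\<omega>. g (U \<omega>)) (1 / (k - 2))"
proof -
  have "g x = x powr -1" if "0 < x" for x
    using g(2)[OF that] that by (simp add: powr_minus_divide)
  note moment = chi_squared_moment[OF U _ _ g(1) this]
  show ?thesis
    using moment k Gamma_half_ratio_minus_one[OF k] by (simp add: has_bochner_integral_iff)
qed

lemma (in prob_space) chi_squared_inverse_square_moment:
  assumes U: "distributed M lborel U (\<lambda>x. ennreal (chi_squared_density k x))" and k: "4 < k"
    and g: "g \<in> borel_measurable borel" "\<And>x. 0 < x \<Longrightarrow> g x = 1 / x\<^sup>2"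
  shows "has_bochner_integral M (\<lambda>\<omega>. g (U \<omega>)) (1 / ((k - 2) * (k - 4)))"
proof -
  have "g x = x powr -2" if "0 < x" for x
    using g(2)[OF that] that by (simp add: powr_minus_divide powr_numeral)
  note moment = chi_squared_moment[OF U _ _ g(1) this]
  show ?thesis
    using moment k Gamma_half_ratio_minus_two[OF k] by (simp add: has_bochner_integral_iff)
qed


section \<open>Moments of a normal sample\<close>

locale normal_sample = prob_space +
  fixes n :: nat and \<mu> \<sigma> :: real and Y :: "nat \<Rightarrow> 'a \<Rightarrow> real"
  assumes sample_size_pos: "0 < n" and sigma_pos: "0 < \<sigma>"
    and normal: "\<And>i. i < n \<Longrightarrow> distributed M lborel (Y i) (\<lambda>x. ennreal (normal_density \<mu> \<sigma> x))"
    and indep: "indep_vars (\<lambda>_. borel) Y {..<n}"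
begin

definition dev :: "nat \<Rightarrow> 'a \<Rightarrow> real" where
  "dev i \<omega> = Y i \<omega> - \<mu>"

lemma measurable_Y [measurable]: "i < n \<Longrightarrow> Y i \<in> borel_measurable M"
  using distributed_measurable[OF normal] by simp

lemma indep_dev: "indep_vars (\<lambda>_. borel) dev {..<n}"
  unfolding dev_def by (rule indep_vars_compose2[OF indep]) measurable

definition central_moment :: "nat \<Rightarrow> real" where
  "central_moment m = (\<integral>x. normal_density \<mu> \<sigma> x * (x - \<mu>) ^ m \<partial>lborel)"

lemma has_bochner_integral_dev_power:
  assumes "i < n"
  shows "has_bochner_integral M (\<lambda>\<omega>. dev i \<omega> ^ m) (central_moment m)"
  unfolding dev_def central_moment_def
  by (rule distributed_has_bochner_integral[OF normal[OF assms]])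
     (simp_all add: has_bochner_integral_iff integrable_normal_moment[OF sigma_pos])

lemma central_moment_values:
  "central_moment 0 = 1" "central_moment (Suc 0) = 0" "central_moment (Suc (Suc 0)) = \<sigma>\<^sup>2"
  "central_moment (Suc (Suc (Suc 0))) = 0" "central_moment (Suc (Suc (Suc (Suc 0)))) = 3 * \<sigma> ^ 4"
  using integral_normal_moment_even[OF sigma_pos, of \<mu> 0] integral_normal_moment_odd[OF sigma_pos, of \<mu> 0]
    integral_normal_moment_even[OF sigma_pos, of \<mu> 1] integral_normal_moment_odd[OF sigma_pos, of \<mu> 1]
    integral_normal_moment_even[OF sigma_pos, of \<mu> 2] sigma_pos
  by (simp_all add: central_moment_def numeral_eq_Suc fact_numeral power_divide field_simps)

lemma has_bochner_integral_dev_prod: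
  assumes "set xs \<subseteq> {..<n}"
  shows "has_bochner_integral M (\<lambda>\<omega>. \<Prod>i\<leftarrow>xs. dev i \<omega>) (\<Prod>i\<in>set xs. central_moment (count_list xs i))"
  using assms by (intro has_bochner_integral_indep_prod_list[OF indep_dev] has_bochner_integral_dev_power) auto

lemma has_bochner_integral_dev_prod2:
  assumes "i < n" "j < n"
  shows "has_bochner_integral M (\<lambda>\<omega>. dev i \<omega> * dev j \<omega>) (\<sigma>\<^sup>2 * of_bool (i = j))"
  using has_bochner_integral_dev_prod[of "[i, j]"] assms
  by (cases "i = j") (simp_all add: central_moment_values)

lemma has_bochner_integral_dev_prod4:
  assumes "i < n" "j < n" "k < n" "l < n"
  shows "has_bochner_integral M (\<lambda>\<omega>. dev i \<omega> * dev j \<omega> * dev k \<omega> * dev l \<omega>)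
    (\<sigma> ^ 4 * (of_bool (i = j) * of_bool (k = l) + of_bool (i = k) * of_bool (j = l)
      + of_bool (i = l) * of_bool (j = k)))"
proof -
  have "(\<Prod>a\<in>set [i, j, k, l]. central_moment (count_list [i, j, k, l] a))
      = \<sigma> ^ 4 * (of_bool (i = j) * of_bool (k = l) + of_bool (i = k) * of_bool (j = l)
          + of_bool (i = l) * of_bool (j = k))"
    by (cases "i = j"; cases "i = k"; cases "i = l"; cases "j = k"; cases "j = l"; cases "k = l")
       (simp_all add: central_moment_values prod.insert_if power2_eq_square power4_eq_xxxx)
  then show ?thesis
    using has_bochner_integral_dev_prod[of "[i, j, k, l]"] assms by (simp add: mult.assoc)
qed

definition dev_sum :: "'a \<Rightarrow> real" where
  "dev_sum \<omega> = (\<Sum>i<n. dev i \<omega>)"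

definition dev_sqsum :: "'a \<Rightarrow> real" where
  "dev_sqsum \<omega> = (\<Sum>i<n. (dev i \<omega>)\<^sup>2)"

lemma sample_mean_eq: "sample_mean n Y \<omega> = \<mu> + dev_sum \<omega> / real n"
  using sample_size_pos by (simp add: sample_mean_def dev_sum_def dev_def sum_subtractf field_simps)

lemma CSS_eq: "CSS n Y \<omega> = dev_sqsum \<omega> - (dev_sum \<omega>)\<^sup>2 / real n"
proof -
  let ?m = "dev_sum \<omega> / real n"
  have "CSS n Y \<omega> = (\<Sum>i<n. (dev i \<omega> - ?m)\<^sup>2)"
    unfolding CSS_def sample_mean_eq by (simp add: dev_def algebra_simps)
  also have "\<dots> = (\<Sum>i<n. (dev i \<omega>)\<^sup>2 + ?m\<^sup>2 - 2 * dev i \<omega> * ?m)"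
    by (simp only: power2_diff)
  also have "\<dots> = dev_sqsum \<omega> + real n * ?m\<^sup>2 - 2 * dev_sum \<omega> * ?m"
    by (simp add: sum.distrib sum_subtractf sum_distrib_left[symmetric] sum_distrib_right[symmetric]
        sum_divide_distrib[symmetric] dev_sqsum_def dev_sum_def[symmetric])
  also have "\<dots> = dev_sqsum \<omega> - (dev_sum \<omega>)\<^sup>2 / real n"
    using sample_size_pos by (simp add: field_simps power2_eq_square)
  finally show ?thesis .
qed

lemma has_bochner_integral_dev_sum: "has_bochner_integral M dev_sum 0"
proof -
  have "has_bochner_integral M (dev i) 0" if "i < n" for i
    using has_bochner_integral_dev_prod[of "[i]"] that by (simp add: central_moment_values)
  then have "has_bochner_integral M (\<lambda>\<omega>. \<Sum>i<n. dev i \<omega>) (\<Sum>i<n. 0)"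
    by (intro has_bochner_integral_sum) auto
  then show ?thesis
    by (simp add: dev_sum_def[abs_def])
qed

lemma has_bochner_integral_dev_sqsum: "has_bochner_integral M dev_sqsum (real n * \<sigma>\<^sup>2)"
proof -
  have "has_bochner_integral M (\<lambda>\<omega>. (dev i \<omega>)\<^sup>2) (\<sigma>\<^sup>2)" if "i < n" for i
    using has_bochner_integral_dev_prod2[OF that that] by (simp add: power2_eq_square)
  then have "has_bochner_integral M (\<lambda>\<omega>. \<Sum>i<n. (dev i \<omega>)\<^sup>2) (\<Sum>i<n. \<sigma>\<^sup>2)"
    by (intro has_bochner_integral_sum) auto
  then show ?thesis
    by (simp add: dev_sqsum_def[abs_def])
qed

lemma has_bochner_integral_dev_sum_sq: "has_bochner_integral M (\<lambda>\<omega>. (dev_sum \<omega>)\<^sup>2) (real n * \<sigma>\<^sup>2)"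
proof -
  have "has_bochner_integral M (\<lambda>\<omega>. \<Sum>i<n. \<Sum>j<n. dev i \<omega> * dev j \<omega>) (\<Sum>i<n. \<Sum>j<n. \<sigma>\<^sup>2 * of_bool (i = j))"
    by (intro has_bochner_integral_sum has_bochner_integral_dev_prod2) auto
  moreover have "(\<Sum>i<n. \<Sum>j<n. dev i \<omega> * dev j \<omega>) = (dev_sum \<omega>)\<^sup>2" for \<omega>
    by (simp add: dev_sum_def power2_eq_square sum_product)
  ultimately show ?thesis
    by simp
qed

lemma has_bochner_integral_dev_sqsum_sq:
  "has_bochner_integral M (\<lambda>\<omega>. (dev_sqsum \<omega>)\<^sup>2) ((real n ^ 2 + 2 * real n) * \<sigma> ^ 4)"
proof -
  have "has_bochner_integral M (\<lambda>\<omega>. dev i \<omega> * dev i \<omega> * dev k \<omega> * dev k \<omega>) (\<sigma> ^ 4 * (1 + 2 * of_bool (i = k)))"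
    if "i < n" "k < n" for i k
  proof -
    have "\<sigma> ^ 4 * (of_bool (i = i) * of_bool (k = k) + of_bool (i = k) * of_bool (i = k)
          + of_bool (i = k) * of_bool (i = k))
        = \<sigma> ^ 4 * (1 + 2 * of_bool (i = k))"
      by (cases "i = k") simp_all
    then show ?thesis
      using has_bochner_integral_dev_prod4[OF that(1,1,2,2)] by (simp only:)
  qed
  then have "has_bochner_integral M (\<lambda>\<omega>. \<Sum>i<n. \<Sum>k<n. dev i \<omega> * dev i \<omega> * dev k \<omega> * dev k \<omega>)
      (\<Sum>i<n. \<Sum>k<n. \<sigma> ^ 4 * (1 + 2 * of_bool (i = k)))"
    by (intro has_bochner_integral_sum) auto
  moreover have "(\<Sum>i<n. \<Sum>k<n. dev i \<omega> * dev i \<omega> * dev k \<omega> * dev k \<omega>) = (dev_sqsum \<omega>)\<^sup>2" for \<omega>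
    by (simp add: dev_sqsum_def power2_eq_square sum_product mult_ac)
  moreover have "(\<Sum>i<n. \<Sum>k<n. \<sigma> ^ 4 * (1 + 2 * of_bool (i = k))) = (real n ^ 2 + 2 * real n) * \<sigma> ^ 4"
    by (simp add: sum.distrib sum_distrib_left[symmetric] power2_eq_square algebra_simps)
  ultimately show ?thesis
    by simp
qed

lemma has_bochner_integral_dev_sqsum_mult_dev_sum_sq:
  "has_bochner_integral M (\<lambda>\<omega>. dev_sqsum \<omega> * (dev_sum \<omega>)\<^sup>2) ((real n ^ 2 + 2 * real n) * \<sigma> ^ 4)"
proof -
  have "has_bochner_integral M (\<lambda>\<omega>. dev i \<omega> * dev i \<omega> * dev j \<omega> * dev k \<omega>)
      (\<sigma> ^ 4 * (of_bool (j = k) + 2 * (of_bool (i = j) * of_bool (i = k))))"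
    if "i < n" "j < n" "k < n" for i j k
  proof -
    have "\<sigma> ^ 4 * (of_bool (i = i) * of_bool (j = k) + of_bool (i = j) * of_bool (i = k)
          + of_bool (i = k) * of_bool (i = j))
        = \<sigma> ^ 4 * (of_bool (j = k) + 2 * (of_bool (i = j) * of_bool (i = k)))"
      by simp
    then show ?thesis
      using has_bochner_integral_dev_prod4[OF that(1,1,2,3)] by (simp only:)
  qed
  then have "has_bochner_integral M (\<lambda>\<omega>. \<Sum>i<n. \<Sum>j<n. \<Sum>k<n. dev i \<omega> * dev i \<omega> * dev j \<omega> * dev k \<omega>)
      (\<Sum>i<n. \<Sum>j<n. \<Sum>k<n. \<sigma> ^ 4 * (of_bool (j = k) + 2 * (of_bool (i = j) * of_bool (i = k))))"
    by (intro has_bochner_integral_sum) auto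
  moreover have "dev_sqsum \<omega> * (dev_sum \<omega>)\<^sup>2 = (\<Sum>i<n. \<Sum>j<n. \<Sum>k<n. dev i \<omega> * dev i \<omega> * dev j \<omega> * dev k \<omega>)" for \<omega>
  proof -
    have "dev_sqsum \<omega> * (dev_sum \<omega>)\<^sup>2 = (\<Sum>i<n. dev i \<omega> * dev i \<omega>) * ((\<Sum>j<n. dev j \<omega>) * (\<Sum>k<n. dev k \<omega>))"
      by (simp add: dev_sqsum_def dev_sum_def power2_eq_square)
    also have "\<dots> = (\<Sum>i<n. \<Sum>j<n. \<Sum>k<n. dev i \<omega> * dev i \<omega> * (dev j \<omega> * dev k \<omega>))"
      unfolding sum_product by (simp only: sum_distrib_left)
    finally show ?thesis
      by (simp add: mult.assoc)
  qed
  moreover have "(\<Sum>i<n. \<Sum>j<n. \<Sum>k<n. \<sigma> ^ 4 * (of_bool (j = k) + 2 * (of_bool (i = j) * of_bool (i = k))))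
      = (real n ^ 2 + 2 * real n) * \<sigma> ^ 4"
    by (simp add: sum.distrib sum_distrib_left[symmetric] power2_eq_square algebra_simps)
  ultimately show ?thesis
    by simp
qed

lemma has_bochner_integral_dev_sum_pow4:
  "has_bochner_integral M (\<lambda>\<omega>. dev_sum \<omega> ^ 4) (3 * real n ^ 2 * \<sigma> ^ 4)"
proof -
  let ?w = "\<lambda>i j k l. \<sigma> ^ 4 * (of_bool (i = j) * of_bool (k = l) + of_bool (i = k) * of_bool (j = l)
    + of_bool (i = l) * of_bool (j = k))"
  have "has_bochner_integral M (\<lambda>\<omega>. \<Sum>i<n. \<Sum>j<n. \<Sum>k<n. \<Sum>l<n. dev i \<omega> * dev j \<omega> * dev k \<omega> * dev l \<omega>)
      (\<Sum>i<n. \<Sum>j<n. \<Sum>k<n. \<Sum>l<n. ?w i j k l)"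
    by (intro has_bochner_integral_sum has_bochner_integral_dev_prod4) auto
  moreover have "(\<Sum>i<n. \<Sum>j<n. \<Sum>k<n. \<Sum>l<n. dev i \<omega> * dev j \<omega> * dev k \<omega> * dev l \<omega>) = dev_sum \<omega> ^ 4" for \<omega>
    by (simp add: dev_sum_def power4_eq_xxxx sum_product sum_distrib_left mult_ac)
  moreover have "(\<Sum>i<n. \<Sum>j<n. \<Sum>k<n. \<Sum>l<n. ?w i j k l) = 3 * real n ^ 2 * \<sigma> ^ 4"
    by (simp add: sum.distrib sum_distrib_left[symmetric] power2_eq_square algebra_simps)
  ultimately show ?thesis
    by simp
qed

lemma measurable_sample_mean [measurable]: "sample_mean n Y \<in> borel_measurable M"
  unfolding sample_mean_def[abs_def] by measurable

lemma measurable_CSS [measurable]: "CSS n Y \<in> borel_measurable M"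
  unfolding CSS_def[abs_def] by measurable

lemma CSS_nonneg: "0 \<le> CSS n Y \<omega>"
  by (simp add: CSS_def sum_nonneg)

lemma has_bochner_integral_sample_mean: "has_bochner_integral M (sample_mean n Y) \<mu>"
proof -
  have "has_bochner_integral M (\<lambda>\<omega>. \<mu> + dev_sum \<omega> / real n) (\<mu> + 0 / real n)"
    by (intro has_bochner_integral_add has_bochner_integral_const has_bochner_integral_divide_zero
        has_bochner_integral_dev_sum)
  then show ?thesis
    by (simp add: sample_mean_eq[abs_def])
qed

lemma has_bochner_integral_sample_mean_sq:
  "has_bochner_integral M (\<lambda>\<omega>. (sample_mean n Y \<omega>)\<^sup>2) (\<mu>\<^sup>2 + \<sigma>\<^sup>2 / real n)"
proof -
  have "has_bochner_integral M (\<lambda>\<omega>. \<mu>\<^sup>2 + 2 * \<mu> * (dev_sum \<omega> / real n) + (dev_sum \<omega>)\<^sup>2 / (real n)\<^sup>2)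
      (\<mu>\<^sup>2 + 2 * \<mu> * (0 / real n) + real n * \<sigma>\<^sup>2 / (real n)\<^sup>2)"
    by (intro has_bochner_integral_add has_bochner_integral_const has_bochner_integral_mult_right
        has_bochner_integral_divide_zero has_bochner_integral_dev_sum has_bochner_integral_dev_sum_sq)
  moreover have "(sample_mean n Y \<omega>)\<^sup>2 = \<mu>\<^sup>2 + 2 * \<mu> * (dev_sum \<omega> / real n) + (dev_sum \<omega>)\<^sup>2 / (real n)\<^sup>2" for \<omega>
    by (simp add: sample_mean_eq power2_sum power_divide)
  ultimately show ?thesis
    using sample_size_pos by (simp add: power2_eq_square)
qed

lemma has_bochner_integral_CSS: "has_bochner_integral M (CSS n Y) ((real n - 1) * \<sigma>\<^sup>2)"
proof -
  have "has_bochner_integral M (\<lambda>\<omega>. dev_sqsum \<omega> - (dev_sum \<omega>)\<^sup>2 / real n)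
      (real n * \<sigma>\<^sup>2 - real n * \<sigma>\<^sup>2 / real n)"
    by (intro has_bochner_integral_diff has_bochner_integral_divide_zero
        has_bochner_integral_dev_sqsum has_bochner_integral_dev_sum_sq)
  then show ?thesis
    using sample_size_pos by (simp add: CSS_eq[abs_def] algebra_simps)
qed

lemma has_bochner_integral_CSS_sq: "has_bochner_integral M (\<lambda>\<omega>. (CSS n Y \<omega>)\<^sup>2) ((real n ^ 2 - 1) * \<sigma> ^ 4)"
proof -
  have "has_bochner_integral M
      (\<lambda>\<omega>. (dev_sqsum \<omega>)\<^sup>2 - 2 * (dev_sqsum \<omega> * (dev_sum \<omega>)\<^sup>2) / real n + dev_sum \<omega> ^ 4 / (real n)\<^sup>2)
      ((real n ^ 2 + 2 * real n) * \<sigma> ^ 4 - 2 * ((real n ^ 2 + 2 * real n) * \<sigma> ^ 4) / real n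
        + 3 * real n ^ 2 * \<sigma> ^ 4 / (real n)\<^sup>2)"
    by (intro has_bochner_integral_add has_bochner_integral_diff has_bochner_integral_divide_zero
        has_bochner_integral_mult_right has_bochner_integral_dev_sqsum_sq
        has_bochner_integral_dev_sqsum_mult_dev_sum_sq has_bochner_integral_dev_sum_pow4)
  moreover have "(CSS n Y \<omega>)\<^sup>2
      = (dev_sqsum \<omega>)\<^sup>2 - 2 * (dev_sqsum \<omega> * (dev_sum \<omega>)\<^sup>2) / real n + dev_sum \<omega> ^ 4 / (real n)\<^sup>2" for \<omega>
    using sample_size_pos by (simp add: CSS_eq field_simps power2_eq_square power4_eq_xxxx)
  moreover have "(real n ^ 2 + 2 * real n) * \<sigma> ^ 4 - 2 * ((real n ^ 2 + 2 * real n) * \<sigma> ^ 4) / real n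
        + 3 * real n ^ 2 * \<sigma> ^ 4 / (real n)\<^sup>2 = (real n ^ 2 - 1) * \<sigma> ^ 4"
    using sample_size_pos by (simp add: field_simps power2_eq_square)
  ultimately show ?thesis
    by simp
qed

lemma integrable_sqrt_CSS: "integrable M (\<lambda>\<omega>. sqrt (CSS n Y \<omega>))"
proof (rule Bochner_Integration.integrable_bound)
  show "integrable M (\<lambda>\<omega>. 1 + CSS n Y \<omega>)"
    using has_bochner_integral_CSS by (auto simp: has_bochner_integral_iff)
  show "AE \<omega> in M. norm (sqrt (CSS n Y \<omega>)) \<le> norm (1 + CSS n Y \<omega>)"
  proof (intro AE_I2)
    fix \<omega>
    have "sqrt (CSS n Y \<omega>) \<le> (1 + CSS n Y \<omega>) / 2"
      using arith_geo_mean_sqrt[of 1 "CSS n Y \<omega>"] CSS_nonneg by simp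
    then show "norm (sqrt (CSS n Y \<omega>)) \<le> norm (1 + CSS n Y \<omega>)"
      using CSS_nonneg[of \<omega>] by simp
  qed
qed measurable

lemma integrable_sample_mean_mult_sqrt_CSS: "integrable M (\<lambda>\<omega>. sample_mean n Y \<omega> * sqrt (CSS n Y \<omega>))"
proof (rule Bochner_Integration.integrable_bound)
  show "integrable M (\<lambda>\<omega>. (sample_mean n Y \<omega>)\<^sup>2 + CSS n Y \<omega>)"
    using has_bochner_integral_sample_mean_sq has_bochner_integral_CSS by (auto simp: has_bochner_integral_iff)
  have "\<bar>sample_mean n Y \<omega> * sqrt (CSS n Y \<omega>)\<bar> \<le> (sample_mean n Y \<omega>)\<^sup>2 + CSS n Y \<omega>" for \<omega>
  proof -
    have "\<bar>sample_mean n Y \<omega> * sqrt (CSS n Y \<omega>)\<bar> \<le> ((sample_mean n Y \<omega>)\<^sup>2 + CSS n Y \<omega>) / 2"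
      using arith_geo_mean_sqrt[of "(sample_mean n Y \<omega>)\<^sup>2" "CSS n Y \<omega>"] CSS_nonneg[of \<omega>]
      by (simp add: real_sqrt_mult abs_mult)
    moreover have "0 \<le> (sample_mean n Y \<omega>)\<^sup>2 + CSS n Y \<omega>"
      using CSS_nonneg[of \<omega>] by simp
    ultimately show ?thesis
      by argo
  qed
  then show "AE \<omega> in M. norm (sample_mean n Y \<omega> * sqrt (CSS n Y \<omega>)) \<le> norm ((sample_mean n Y \<omega>)\<^sup>2 + CSS n Y \<omega>)"
    by (intro AE_I2) (simp add: CSS_nonneg)
qed measurable

end


section \<open>Posterior draws\<close>

locale posterior_draw = prob_space +
  fixes n :: nat and \<mu> \<sigma> \<nu> :: real and Y :: "nat \<Rightarrow> 'a \<Rightarrow> real" and U Z :: "'a \<Rightarrow> real"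
  assumes sample_size_pos: "0 < n" and sigma_pos: "0 < \<sigma>"
    and normal: "\<And>i. i < n \<Longrightarrow> distributed M lborel (Y i) (\<lambda>x. ennreal (normal_density \<mu> \<sigma> x))"
    and chi_squared: "distributed M lborel U (\<lambda>x. ennreal (chi_squared_density (\<nu> + real n - 1) x))"
    and noise: "distributed M lborel Z (\<lambda>x. ennreal (normal_density 0 (1 / sqrt (real n)) x))"
    and indep_draws: "indep_vars (\<lambda>_. borel) (\<lambda>j. case j of Inl i \<Rightarrow> Y i | Inr b \<Rightarrow> if b then Z else U)
      (Inl ` {..<n} \<union> Inr ` UNIV)"
begin

abbreviation draws :: "nat + bool \<Rightarrow> 'a \<Rightarrow> real" where
  "draws \<equiv> \<lambda>j. case j of Inl i \<Rightarrow> Y i | Inr b \<Rightarrow> if b then Z else U"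

sublocale sample: normal_sample M n \<mu> \<sigma> Y
proof
  have "indep_vars (\<lambda>_. borel) (\<lambda>i. draws (Inl i)) {..<n}"
    by (rule indep_vars_reindex[OF _ indep_vars_subset[OF indep_draws]]) auto
  then show "indep_vars (\<lambda>_. borel) Y {..<n}"
    by simp
qed (use sample_size_pos sigma_pos normal in auto)

lemma has_bochner_integral_noise: "has_bochner_integral M Z 0"
  and has_bochner_integral_noise_sq: "has_bochner_integral M (\<lambda>\<omega>. (Z \<omega>)\<^sup>2) (1 / real n)"
proof -
  have sd: "0 < 1 / sqrt (real n)"
    using sample_size_pos by simp
  show "has_bochner_integral M Z 0"
    using distributed_has_bochner_integral[OF noise _ _ normal_moment_odd[OF sd, of 0 0]] by simp
  show "has_bochner_integral M (\<lambda>\<omega>. (Z \<omega>)\<^sup>2) (1 / real n)"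
    using distributed_has_bochner_integral[OF noise _ _ normal_moment_even[OF sd, of 0 1]] sample_size_pos
    by (simp add: power_divide)
qed

lemma measurable_sample_component [measurable]:
  "i < n \<Longrightarrow> (\<lambda>f. f (Inl i)) \<in> borel_measurable (PiM (Inl ` {..<n}) (\<lambda>_. borel :: real measure))"
  by (rule measurable_component_singleton) auto

text \<open>
  A sample statistic is the same statistic evaluated at the point \<open>\<lambda>j\<in>Inl ` {..<n}. draws j \<omega>\<close>
  of the product space of the sample coordinates, which is the form required by the block
  independence of the sample from \<open>U\<close> and \<open>Z\<close>.
\<close>
lemma sample_mean_restrict:
  "sample_mean n (\<lambda>i f. f (Inl i)) (\<lambda>j\<in>Inl ` {..<n}. draws j \<omega>) = sample_mean n Y \<omega>"
  by (simp add: sample_mean_def)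

lemma CSS_restrict: "CSS n (\<lambda>i f. f (Inl i)) (\<lambda>j\<in>Inl ` {..<n}. draws j \<omega>) = CSS n Y \<omega>"
  by (simp add: CSS_def sample_mean_restrict)

lemma measurable_sample_mean_restrict [measurable]:
  "sample_mean n (\<lambda>i f. f (Inl i)) \<in> borel_measurable (PiM (Inl ` {..<n}) (\<lambda>_. borel))"
  unfolding sample_mean_def[abs_def] by measurable

lemma measurable_CSS_restrict [measurable]:
  "CSS n (\<lambda>i f. f (Inl i)) \<in> borel_measurable (PiM (Inl ` {..<n}) (\<lambda>_. borel))"
  unfolding CSS_def[abs_def] by measurable

lemma has_bochner_integral_sample_stat_mult:
  fixes F :: "(nat + bool \<Rightarrow> real) \<Rightarrow> real" and T :: "'a \<Rightarrow> real" and g h :: "real \<Rightarrow> real"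
  assumes F: "F \<in> borel_measurable (PiM (Inl ` {..<n}) (\<lambda>_. borel))"
    and T: "\<And>\<omega>. F (\<lambda>j\<in>Inl ` {..<n}. draws j \<omega>) = T \<omega>"
    and gh: "g \<in> borel_measurable borel" "h \<in> borel_measurable borel"
    and integrals: "has_bochner_integral M T u" "has_bochner_integral M (\<lambda>\<omega>. g (U \<omega>)) v"
      "has_bochner_integral M (\<lambda>\<omega>. h (Z \<omega>)) w"
  shows "has_bochner_integral M (\<lambda>\<omega>. T \<omega> * (g (U \<omega>) * h (Z \<omega>))) (u * (v * w))"
proof -
  have "indep_vars (\<lambda>_. borel) draws (insert (Inr False) (insert (Inr True) (Inl ` {..<n})))"
    by (rule indep_vars_subset[OF indep_draws]) auto
  from has_bochner_integral_indep_block_mult[OF this _ _ _ F gh] integrals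
  show ?thesis
    by (auto simp: T)
qed

lemma mu_PD_eq: "mu_PD n Y U Z \<omega> = sample_mean n Y \<omega> + sqrt (CSS n Y \<omega>) * (1 / sqrt (U \<omega>) * Z \<omega>)"
  by (simp add: mu_PD_def sigma2_PD_def real_sqrt_divide)

lemma mu_PD_sq_eq:
  "(mu_PD n Y U Z \<omega>)\<^sup>2 = (sample_mean n Y \<omega>)\<^sup>2
    + 2 * (sample_mean n Y \<omega> * sqrt (CSS n Y \<omega>) * (1 / sqrt (U \<omega>) * Z \<omega>))
    + CSS n Y \<omega> * ((1 / sqrt (U \<omega>))\<^sup>2 * (Z \<omega>)\<^sup>2)"
proof -
  have expand: "(a + s * (r * z))\<^sup>2 = a\<^sup>2 + 2 * (a * s * (r * z)) + s\<^sup>2 * (r\<^sup>2 * z\<^sup>2)" for a s r z :: real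
    by (simp add: power2_eq_square algebra_simps)
  have "(sqrt (CSS n Y \<omega>))\<^sup>2 = CSS n Y \<omega>"
    using sample.CSS_nonneg by simp
  then show ?thesis
    unfolding mu_PD_eq expand by simp
qed

lemma integrable_inverse_sqrt_chi_squared:
  assumes "1 < \<nu> + real n - 1"
  shows "integrable M (\<lambda>\<omega>. 1 / sqrt (U \<omega>))"
proof -
  have "has_bochner_integral M (\<lambda>\<omega>. 1 / sqrt (U \<omega>))
      (2 powr -(1/2) * Gamma ((\<nu> + real n - 1) / 2 + -(1/2)) / Gamma ((\<nu> + real n - 1) / 2))"
    using assms by (intro chi_squared_moment[OF chi_squared]) (auto simp: powr_minus_divide powr_half_sqrt)
  then show ?thesis
    by (simp add: has_bochner_integral_iff)
qed

lemma has_bochner_integral_mu_PD: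
  assumes "2 < \<nu> + real n - 1"
  shows "has_bochner_integral M (mu_PD n Y U Z) \<mu>"
proof -
  have "has_bochner_integral M (\<lambda>\<omega>. sqrt (CSS n Y \<omega>) * (1 / sqrt (U \<omega>) * Z \<omega>))
      ((\<integral>\<omega>. sqrt (CSS n Y \<omega>) \<partial>M) * ((\<integral>\<omega>. 1 / sqrt (U \<omega>) \<partial>M) * 0))"
    using sample.integrable_sqrt_CSS integrable_inverse_sqrt_chi_squared assms
    by (intro has_bochner_integral_sample_stat_mult[where F="\<lambda>f. sqrt (CSS n (\<lambda>i f. f (Inl i)) f)"]
        has_bochner_integral_noise)
       (auto simp: CSS_restrict has_bochner_integral_iff)
  from has_bochner_integral_add[OF sample.has_bochner_integral_sample_mean this]
  show ?thesis
    by (simp add: mu_PD_eq[abs_def])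
qed

lemma has_bochner_integral_mu_PD_sq:
  assumes "2 < \<nu> + real n - 1"
  shows "has_bochner_integral M (\<lambda>\<omega>. (mu_PD n Y U Z \<omega>)\<^sup>2)
    (\<mu>\<^sup>2 + \<sigma>\<^sup>2 / real n + (real n - 1) * \<sigma>\<^sup>2 / ((\<nu> + real n - 3) * real n))"
proof -
  let ?stat = "\<lambda>f. sample_mean n (\<lambda>i f. f (Inl i)) f * sqrt (CSS n (\<lambda>i f. f (Inl i)) f)"
  have cross: "has_bochner_integral M
      (\<lambda>\<omega>. sample_mean n Y \<omega> * sqrt (CSS n Y \<omega>) * (1 / sqrt (U \<omega>) * Z \<omega>))
      ((\<integral>\<omega>. sample_mean n Y \<omega> * sqrt (CSS n Y \<omega>) \<partial>M) * ((\<integral>\<omega>. 1 / sqrt (U \<omega>) \<partial>M) * 0))"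
    using sample.integrable_sample_mean_mult_sqrt_CSS integrable_inverse_sqrt_chi_squared assms
    by (intro has_bochner_integral_sample_stat_mult[where F="?stat"] has_bochner_integral_noise)
       (auto simp: CSS_restrict sample_mean_restrict has_bochner_integral_iff)
  have "has_bochner_integral M (\<lambda>\<omega>. (1 / sqrt (U \<omega>))\<^sup>2) (1 / (\<nu> + real n - 1 - 2))"
    using assms by (intro chi_squared_inverse_moment[OF chi_squared]) (auto simp: power_divide)
  then have square: "has_bochner_integral M (\<lambda>\<omega>. CSS n Y \<omega> * ((1 / sqrt (U \<omega>))\<^sup>2 * (Z \<omega>)\<^sup>2))
      ((real n - 1) * \<sigma>\<^sup>2 * (1 / (\<nu> + real n - 1 - 2) * (1 / real n)))"
    by (intro has_bochner_integral_sample_stat_mult[where F="CSS n (\<lambda>i f. f (Inl i))"]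
        sample.has_bochner_integral_CSS has_bochner_integral_noise_sq)
       (auto simp: CSS_restrict)
  from has_bochner_integral_add[OF has_bochner_integral_add[OF sample.has_bochner_integral_sample_mean_sq
        has_bochner_integral_mult_right[where c=2, OF cross]] square]
  show ?thesis
    by (rule has_bochner_integral_cong[THEN iffD1, rotated -1])
       (use assms sample_size_pos in \<open>simp_all add: mu_PD_sq_eq field_simps\<close>)
qed

lemma has_bochner_integral_sigma2_PD:
  assumes "2 < \<nu> + real n - 1"
  shows "has_bochner_integral M (sigma2_PD n Y U) ((real n - 1) * \<sigma>\<^sup>2 / (\<nu> + real n - 3))"
proof -
  have "has_bochner_integral M (\<lambda>\<omega>. 1 / U \<omega>) (1 / (\<nu> + real n - 1 - 2))"
    using assms by (intro chi_squared_inverse_moment[OF chi_squared]) auto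
  then have "has_bochner_integral M (\<lambda>\<omega>. CSS n Y \<omega> * (1 / U \<omega> * 1))
      ((real n - 1) * \<sigma>\<^sup>2 * (1 / (\<nu> + real n - 1 - 2) * 1))"
    by (intro has_bochner_integral_sample_stat_mult[where F="CSS n (\<lambda>i f. f (Inl i))"]
        sample.has_bochner_integral_CSS has_bochner_integral_const)
       (auto simp: CSS_restrict)
  then show ?thesis
    by (simp add: sigma2_PD_def[abs_def])
qed

lemma has_bochner_integral_sigma2_PD_sq:
  assumes "4 < \<nu> + real n - 1"
  shows "has_bochner_integral M (\<lambda>\<omega>. (sigma2_PD n Y U \<omega>)\<^sup>2)
    ((real n ^ 2 - 1) * \<sigma> ^ 4 / ((\<nu> + real n - 3) * (\<nu> + real n - 5)))"
proof -
  have "has_bochner_integral M (\<lambda>\<omega>. (1 / U \<omega>)\<^sup>2) (1 / ((\<nu> + real n - 1 - 2) * (\<nu> + real n - 1 - 4)))"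
    using assms by (intro chi_squared_inverse_square_moment[OF chi_squared]) (auto simp: power_divide)
  then have "has_bochner_integral M (\<lambda>\<omega>. (CSS n Y \<omega>)\<^sup>2 * ((1 / U \<omega>)\<^sup>2 * 1))
      ((real n ^ 2 - 1) * \<sigma> ^ 4 * (1 / ((\<nu> + real n - 1 - 2) * (\<nu> + real n - 1 - 4)) * 1))"
    by (intro has_bochner_integral_sample_stat_mult[where F="\<lambda>f. (CSS n (\<lambda>i f. f (Inl i)) f)\<^sup>2"]
        sample.has_bochner_integral_CSS_sq has_bochner_integral_const)
       (auto simp: CSS_restrict)
  then show ?thesis
    by (simp add: sigma2_PD_def[abs_def] power_divide algebra_simps)
qed

theorem posterior_draw_mu_moments_sigma2_bias:
  assumes "3 < real n + \<nu>"
  shows "integrable M (mu_PD n Y U Z)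
      \<and> integrable M (\<lambda>\<omega>. (mu_PD n Y U Z \<omega>)\<^sup>2)
      \<and> integrable M (sigma2_PD n Y U)
      \<and> (\<integral>\<omega>. mu_PD n Y U Z \<omega> \<partial>M) = \<mu>
      \<and> (\<integral>\<omega>. (mu_PD n Y U Z \<omega> - (\<integral>\<omega>'. mu_PD n Y U Z \<omega>' \<partial>M))\<^sup>2 \<partial>M)
          = \<sigma>\<^sup>2 * (2 * real n + \<nu> - 4) / (real n * (real n + \<nu> - 3))
      \<and> (\<integral>\<omega>. sigma2_PD n Y U \<omega> \<partial>M) - \<sigma>\<^sup>2 = \<sigma>\<^sup>2 * (2 - \<nu>) / (real n + \<nu> - 3)"
proof -
  have dof: "2 < \<nu> + real n - 1"
    using assms by simp
  note mu = has_bochner_integral_mu_PD[OF dof] and mu_sq = has_bochner_integral_mu_PD_sq[OF dof]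
    and sigma2 = has_bochner_integral_sigma2_PD[OF dof]
  have "variance (mu_PD n Y U Z)
      = \<mu>\<^sup>2 + \<sigma>\<^sup>2 / real n + (real n - 1) * \<sigma>\<^sup>2 / ((\<nu> + real n - 3) * real n) - \<mu>\<^sup>2"
    using mu mu_sq by (subst variance_eq) (auto simp: has_bochner_integral_iff)
  also have "\<dots> = \<sigma>\<^sup>2 * (2 * real n + \<nu> - 4) / (real n * (real n + \<nu> - 3))"
  proof -
    define d where "d = real n + \<nu> - 3"
    have d: "0 < d" and \<nu>: "\<nu> = d + 3 - real n"
      using assms by (simp_all add: d_def)
    show ?thesis
      unfolding \<nu> using d sample_size_pos by (simp add: field_simps)
  qed
  moreover have "(\<integral>\<omega>. sigma2_PD n Y U \<omega> \<partial>M) - \<sigma>\<^sup>2 = \<sigma>\<^sup>2 * (2 - \<nu>) / (real n + \<nu> - 3)"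
    using sigma2 assms by (simp add: has_bochner_integral_iff field_simps)
  ultimately show ?thesis
    using mu mu_sq sigma2 by (simp add: has_bochner_integral_iff)
qed

theorem posterior_draw_sigma2_variance:
  assumes "5 < real n + \<nu>"
  shows "integrable M (\<lambda>\<omega>. (sigma2_PD n Y U \<omega>)\<^sup>2)
      \<and> (\<integral>\<omega>. (sigma2_PD n Y U \<omega> - (\<integral>\<omega>'. sigma2_PD n Y U \<omega>' \<partial>M))\<^sup>2 \<partial>M)
          = \<sigma> ^ 4 * (2 * (real n - 1) * (2 * real n + \<nu> - 4))
            / ((real n + \<nu> - 5) * (real n + \<nu> - 3)\<^sup>2)"
proof -
  have dof: "2 < \<nu> + real n - 1" "4 < \<nu> + real n - 1"
    using assms by simp_all
  note sigma2 = has_bochner_integral_sigma2_PD[OF dof(1)]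
    and sigma2_sq = has_bochner_integral_sigma2_PD_sq[OF dof(2)]
  have "variance (sigma2_PD n Y U) = (real n ^ 2 - 1) * \<sigma> ^ 4 / ((\<nu> + real n - 3) * (\<nu> + real n - 5))
      - ((real n - 1) * \<sigma>\<^sup>2 / (\<nu> + real n - 3))\<^sup>2"
    using sigma2 sigma2_sq by (subst variance_eq) (auto simp: has_bochner_integral_iff)
  also have "\<dots> = \<sigma> ^ 4 * (2 * (real n - 1) * (2 * real n + \<nu> - 4))
      / ((real n + \<nu> - 5) * (real n + \<nu> - 3)\<^sup>2)"
  proof -
    define d where "d = real n + \<nu> - 3"
    have d: "2 < d" and \<nu>: "\<nu> = d + 3 - real n"
      using assms by (simp_all add: d_def)
    show ?thesis
      unfolding \<nu> using d by (simp add: field_simps power2_eq_square power4_eq_xxxx)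
  qed
  finally have "variance (sigma2_PD n Y U) = \<sigma> ^ 4 * (2 * (real n - 1) * (2 * real n + \<nu> - 4))
      / ((real n + \<nu> - 5) * (real n + \<nu> - 3)\<^sup>2)" .
  then show ?thesis
    using sigma2_sq by (simp add: has_bochner_integral_iff)
qed

end

theorem mainTheorem1:
  fixes M :: "'a measure" and n :: nat and \<mu> \<sigma> \<nu>_prior :: real
    and Y :: "nat \<Rightarrow> 'a \<Rightarrow> real" and U Z :: "'a \<Rightarrow> real"
  assumes "prob_space M"
    and "n \<ge> 2"
    and "\<sigma> > 0"
    and "\<nu>_prior + real n - 1 > 0"
    and "\<And>i. i < n \<Longrightarrow> distributed M lborel (Y i) (\<lambda>x. ennreal (normal_density \<mu> \<sigma> x))"
    and "distributed M lborel U (\<lambda>x. ennreal (chi_squared_density (\<nu>_prior + real n - 1) x))"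
    and "distributed M lborel Z (\<lambda>x. ennreal (normal_density 0 (1 / sqrt (real n)) x))"
    and "prob_space.indep_vars M (\<lambda>_. borel)
           (\<lambda>j. case j of Inl i \<Rightarrow> Y i | Inr b \<Rightarrow> (if b then Z else U))
           (Inl ` {..<n} \<union> Inr ` UNIV)"
  shows
    "(real n + \<nu>_prior > 3 \<longrightarrow>
        integrable M (mu_PD n Y U Z)
      \<and> integrable M (\<lambda>\<omega>. (mu_PD n Y U Z \<omega>)\<^sup>2)
      \<and> integrable M (sigma2_PD n Y U)
      \<and> (\<integral>\<omega>. mu_PD n Y U Z \<omega> \<partial>M) = \<mu>
      \<and> (\<integral>\<omega>. (mu_PD n Y U Z \<omega> - (\<integral>\<omega>'. mu_PD n Y U Z \<omega>' \<partial>M))\<^sup>2 \<partial>M)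
          = \<sigma>\<^sup>2 * (2 * real n + \<nu>_prior - 4) / (real n * (real n + \<nu>_prior - 3))
      \<and> (\<integral>\<omega>. sigma2_PD n Y U \<omega> \<partial>M) - \<sigma>\<^sup>2
          = \<sigma>\<^sup>2 * (2 - \<nu>_prior) / (real n + \<nu>_prior - 3))
   \<and> (real n + \<nu>_prior > 5 \<longrightarrow>
        integrable M (\<lambda>\<omega>. (sigma2_PD n Y U \<omega>)\<^sup>2)
      \<and> (\<integral>\<omega>. (sigma2_PD n Y U \<omega> - (\<integral>\<omega>'. sigma2_PD n Y U \<omega>' \<partial>M))\<^sup>2 \<partial>M)
          = \<sigma> ^ 4 * (2 * (real n - 1) * (2 * real n + \<nu>_prior - 4))
            / ((real n + \<nu>_prior - 5) * (real n + \<nu>_prior - 3)\<^sup>2))"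
proof -
  \<comment> \<open>The hypothesis \<open>0 < \<nu>_prior + real n - 1\<close> is implied by \<open>3 < real n + \<nu>_prior\<close>.\<close>
  interpret posterior_draw M n \<mu> \<sigma> \<nu>_prior Y U Z
    by (rule posterior_draw.intro[OF assms(1)], unfold_locales) (use assms in auto)
  show ?thesis
    using posterior_draw_mu_moments_sigma2_bias posterior_draw_sigma2_variance by blast
qed

end
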